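(* With $s=\sqrt{(u_3+u_4)^2-4u_1u_2}$, $$\sum_{n\geq0}P_n(u_1,u_2,u_3,u_4\mid\alpha,\beta)\frac{t^n}{n!}=e^{\frac12(\beta-\alpha)(u_3-u_4)t}\left(\cosh\Bigl(\frac{st}{2}\Bigr)-\frac{u_3+u_4}{s}\sinh\Bigl(\frac{st}{2}\Bigr)\right)^{-(\alpha+\beta)}.$$
   Context: For $\sigma=\sigma_1\cdots\sigma_m\in\mathfrak S_m$: ${\rm LRmax}(\sigma)$ is the number of $i$ with $\sigma_j<\sigma_i$ for all $j<i$; ${\rm RLmax}(\sigma)$ is the number of $i$ with $\sigma_j<\sigma_i$ for all $j>i$. With the convention $\sigma_0=\sigma_{m+1}=0$: ${\rm W}(\sigma)$ is the number of $i\in[m]$ with $\sigma_{i-1}<\sigma_i>\sigma_{i+1}$; ${\rm V}(\sigma)$ is the number of $i$ with $1<i<m$ and $\sigma_{i-1}>\sigma_i<\sigma_{i+1}$; ${\rm rdd}(\sigma)$ is the number of $i$ with $1<i\le m$ and $\sigma_{i-1}>\sigma_i>\sigma_{i+1}$; ${\rm lda}(\sigma)$ is the number of $i$ with $1\le i<m$ and $\sigma_{i-1}<\sigma_i<\sigma_{i+1}$. Define $$P_n(u_1,u_2,u_3,u_4\mid\alpha,\beta)=\sum_{\sigma\in\mathfrak S_{n+1}}u_1^{{\rm V}(\sigma)}u_2^{{\rm W}(\sigma)-1}u_3^{{\rm rdd}(\sigma)}u_4^{{\rm lda}(\sigma)}\alpha^{{\rm LRmax}(\sigma)-1}\beta^{{\rm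 RLmax}(\sigma)-1}.$$ All series are formal power series in $t$; the bracketed series only involves even powers of $s$ (so no square root actually appears) and has constant term $1$, and $G^{c}:=\exp(c\log G)$ for such $G$. *)

theory Defs
  imports "HOL-Combinatorics.Permutations" "HOL-Computational_Algebra.Formal_Power_Series"
begin

definition ext_perm :: "nat \<Rightarrow> (nat \<Rightarrow> nat) \<Rightarrow> nat \<Rightarrow> nat" where
  "ext_perm m \<sigma> i = (if 1 \<le> i \<and> i \<le> m then \<sigma> i else 0)"

definition LRmax :: "nat \<Rightarrow> (nat \<Rightarrow> nat) \<Rightarrow> nat" where
  "LRmax m \<sigma> = card {i \<in> {1..m}. \<forall>j \<in> {1..<i}. \<sigma> j < \<sigma> i}"

definition RLmax :: "nat \<Rightarrow> (nat \<Rightarrow> nat) \<Rightarrow> nat" where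
  "RLmax m \<sigma> = card {i \<in> {1..m}. \<forall>j \<in> {i<..m}. \<sigma> j < \<sigma> i}"

definition peaksW :: "nat \<Rightarrow> (nat \<Rightarrow> nat) \<Rightarrow> nat" where
  "peaksW m \<sigma> = (let e = ext_perm m \<sigma> in
     card {i \<in> {1..m}. e (i - 1) < e i \<and> e i > e (i + 1)})"

definition valleysV :: "nat \<Rightarrow> (nat \<Rightarrow> nat) \<Rightarrow> nat" where
  "valleysV m \<sigma> = (let e = ext_perm m \<sigma> in
     card {i. 1 < i \<and> i < m \<and> e (i - 1) > e i \<and> e i < e (i + 1)})"

definition rdd :: "nat \<Rightarrow> (nat \<Rightarrow> nat) \<Rightarrow> nat" where
  "rdd m \<sigma> = (let e = ext_perm m \<sigma> in
     card {i. 1 < i \<and> i \<le> m \<and> e (i - 1) > e i \<and> e i > e (i + 1)})"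

definition lda :: "nat \<Rightarrow> (nat \<Rightarrow> nat) \<Rightarrow> nat" where
  "lda m \<sigma> = (let e = ext_perm m \<sigma> in
     card {i. 1 \<le> i \<and> i < m \<and> e (i - 1) < e i \<and> e i < e (i + 1)})"

definition Pn :: "nat \<Rightarrow> 'a::comm_ring_1 \<Rightarrow> 'a \<Rightarrow> 'a \<Rightarrow> 'a \<Rightarrow> 'a \<Rightarrow> 'a \<Rightarrow> 'a" where
  "Pn n u1 u2 u3 u4 \<alpha> \<beta> =
     (\<Sum>\<sigma> \<in> {\<sigma>. \<sigma> permutes {1..n+1}}.
        u1 ^ valleysV (n+1) \<sigma> * u2 ^ (peaksW (n+1) \<sigma> - 1) * u3 ^ rdd (n+1) \<sigma> *
        u4 ^ lda (n+1) \<sigma> * \<alpha> ^ (LRmax (n+1) \<sigma> - 1) * \<beta> ^ (RLmax (n+1) \<sigma> - 1))"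

text \<open>G^c := exp(c log G) for G with constant term 1; log G = ln(1+X) composed with G - 1.\<close>
definition fps_cpow :: "'a::field_char_0 \<Rightarrow> 'a fps \<Rightarrow> 'a fps" where
  "fps_cpow c G = fps_exp c oo (fps_ln 1 oo (G - 1))"

text \<open>The series cosh(st/2) - (u3+u4)/s sinh(st/2) with s^2 = (u3+u4)^2 - 4 u1 u2,
  written out coefficientwise (only even powers of s occur).\<close>
definition bracket_fps :: "'a::field_char_0 \<Rightarrow> 'a \<Rightarrow> 'a \<Rightarrow> 'a \<Rightarrow> 'a fps" where
  "bracket_fps u1 u2 u3 u4 = (let D = (u3 + u4)^2 - 4 * u1 * u2 in
     Abs_fps (\<lambda>n. if even n then D ^ (n div 2) / (2 ^ n * fact n)
                  else - (u3 + u4) * D ^ (n div 2) / (2 ^ n * fact n)))"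

end

theory Submission
  imports Defs "HOL-Combinatorics.Multiset_Permutations"
begin

(* Read sigma as the word sigma_1 ... sigma_(n+1), with 0 adjoined at both ends. The summand of
   P_n is a product of factors, one per letter, determined by which of its two neighbours are
   larger, times powers counting left-to-right and right-to-left maxima; in particular it only
   depends on the relative order of the letters. Cutting a word at its largest letter (and a word
   squeezed between two larger letters at its smallest letter) turns the sums over permutations
   into binomial convolutions, i.e. products of exponential generating functions. For the EGFs
   A_a and B_b of words standing left, resp. right, of a larger letter, weighted by a^LRmax,
   resp. b^RLmax, and C of words between two larger letters, this gives

     A_a' = a A_a (u4 + C - 1),   B_b' = b B_b (u3 + C - 1),   C' = u1 u2 B_1 A_1,

   and sum_n P_n t^n/n! = A_alpha B_beta. The bracket G satisfies G'' = (s^2/4) G, so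
   G'^2 - G G'' is the constant u1 u2. With this one checks that exp(-a (u3-u4) t/2) G^(-a),
   exp(b (u3-u4) t/2) G^(-b) and -(u3+u4)/2 - G'/G solve the same system with the same initial
   values, and formal power series solutions of such systems are unique. *)

section \<open>Weights of words determined by neighbouring letters\<close>

text \<open>Every letter contributes a factor \<open>f a b\<close>, where \<open>a\<close> says that its left neighbour is
  larger and \<open>b\<close> that its right neighbour is larger; \<open>bl\<close> and \<open>br\<close> give these comparisons
  for the first and the last letter.\<close>

fun shape_weight :: "(bool \<Rightarrow> bool \<Rightarrow> 'a::comm_monoid_mult) \<Rightarrow> bool \<Rightarrow> bool \<Rightarrow> nat list \<Rightarrow> 'a" where
  "shape_weight f bl br [] = 1"
| "shape_weight f bl br [x] = f bl br"
| "shape_weight f bl br (x # y # ys) = f bl (x < y) * shape_weight f (y < x) br (y # ys)"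

lemma shape_weight_append_Cons:
  "shape_weight f bl br (L @ x # R) =
     (if L = [] then 1 else shape_weight f bl (last L < x) L) *
     f (if L = [] then bl else x < last L) (if R = [] then br else x < hd R) *
     (if R = [] then 1 else shape_weight f (hd R < x) br R)"
proof (induction L arbitrary: bl)
  case Nil
  then show ?case by (cases R) auto
next
  case (Cons a L)
  show ?case
  proof (cases L)
    case Nil
    then show ?thesis by (cases R) (auto simp: mult.assoc)
  next
    case (Cons b L')
    then show ?thesis using Cons.IH[of "b < a"] by (simp add: mult.assoc)
  qed
qed

lemma shape_weight_split_max:
  assumes "\<forall>y\<in>set L \<union> set R. y < x"
  shows "shape_weight f bl br (L @ x # R) =
           shape_weight f bl True L * f (L = [] \<and> bl) (R = [] \<and> br) * shape_weight f True br R"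
  using assms by (subst shape_weight_append_Cons) (cases L rule: rev_cases; cases R; auto)

lemma shape_weight_split_min:
  assumes "\<forall>y\<in>set L \<union> set R. x < y"
  shows "shape_weight f bl br (L @ x # R) =
           shape_weight f bl False L * f (L \<noteq> [] \<or> bl) (R \<noteq> [] \<or> br) * shape_weight f False br R"
  using assms by (subst shape_weight_append_Cons) (cases L rule: rev_cases; cases R; auto)

lemma shape_weight_map:
  assumes "strict_mono_on (set w) h"
  shows "shape_weight f bl br (map h w) = shape_weight f bl br w"
  using assms
proof (induction f bl br w rule: shape_weight.induct)
  case (3 f bl br x y ys)
  have "strict_mono_on (set (y # ys)) h"
    using 3(2) by (simp add: strict_mono_on_def)
  moreover have "h x < h y \<longleftrightarrow> x < y" "h y < h x \<longleftrightarrow> y < x"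
    using strict_mono_on_less[OF 3(2)] by auto
  ultimately show ?case using 3(1) by simp
qed auto

lemma shape_weight_eq_prod:
  "shape_weight f bl br w =
     (\<Prod>k<length w. f (if k = 0 then bl else w ! k < w ! (k - 1))
                      (if Suc k = length w then br else w ! k < w ! Suc k))"
proof (induction f bl br w rule: shape_weight.induct)
  case (3 f bl br x y ys)
  let ?w = "x # y # ys"
  let ?T = "\<lambda>k. f (if k = 0 then bl else ?w ! k < ?w ! (k - 1))
                  (if Suc k = length ?w then br else ?w ! k < ?w ! Suc k)"
  have "(\<Prod>k<length ?w. ?T k) = ?T 0 * (\<Prod>k<length (y # ys). ?T (Suc k))"
    by (simp only: length_Cons prod.lessThan_Suc_shift)
  also have "(\<Prod>k<length (y # ys). ?T (Suc k)) =
     (\<Prod>k<length (y # ys). f (if k = 0 then y < x else (y # ys) ! k < (y # ys) ! (k - 1))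
                             (if Suc k = length (y # ys) then br else (y # ys) ! k < (y # ys) ! Suc k))"
    by (rule prod.cong[OF refl]) (auto split: nat.splits)
  finally show ?case using 3 by simp
qed simp_all

text \<open>With peaks weighted 2, valleys 1/2 and all other letters 1, the factor of a letter is
  \<open>2^[left neighbour smaller] * 2^-[right neighbour larger]\<close>, and the factors of adjacent
  letters cancel.\<close>

definition peak_valley_factor :: "bool \<Rightarrow> bool \<Rightarrow> real" where
  "peak_valley_factor a b = (if a then (if b then 1/2 else 1) else (if b then 1 else 2))"

lemma shape_weight_peak_valley_factor:
  assumes "distinct w" and "w \<noteq> []"
  shows "shape_weight peak_valley_factor bl br w = peak_valley_factor bl br"
  using assms
proof (induction peak_valley_factor bl br w rule: shape_weight.induct)
  case (3 bl br x y ys)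
  then show ?case
    by (cases "x < y"; cases bl; cases br; auto simp: peak_valley_factor_def)
qed (auto simp: peak_valley_factor_def)

section \<open>Left-to-right and right-to-left maxima of words\<close>

definition lr_maxima :: "nat list \<Rightarrow> nat" where
  "lr_maxima w = card {i. i < length w \<and> (\<forall>j<i. w ! j < w ! i)}"

definition rl_maxima :: "nat list \<Rightarrow> nat" where
  "rl_maxima w = card {i. i < length w \<and> (\<forall>j. i < j \<and> j < length w \<longrightarrow> w ! j < w ! i)}"

lemma lr_maxima_map:
  assumes "strict_mono_on (set w) h"
  shows "lr_maxima (map h w) = lr_maxima w"
proof -
  have "{i. i < length (map h w) \<and> (\<forall>j<i. map h w ! j < map h w ! i)} =
        {i. i < length w \<and> (\<forall>j<i. w ! j < w ! i)}"
    using strict_mono_on_less[OF assms] by auto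
  then show ?thesis by (simp add: lr_maxima_def)
qed

lemma lr_maxima_split_max:
  assumes "\<forall>y\<in>set L \<union> set R. y < x"
  shows "lr_maxima (L @ x # R) = Suc (lr_maxima L)"
proof -
  let ?w = "L @ x # R"
  have "{i. i < length ?w \<and> (\<forall>j<i. ?w ! j < ?w ! i)} =
        insert (length L) {i. i < length L \<and> (\<forall>j<i. L ! j < L ! i)}"
  proof (intro set_eqI iffI)
    fix i assume i: "i \<in> {i. i < length ?w \<and> (\<forall>j<i. ?w ! j < ?w ! i)}"
    have "\<not> length L < i"
    proof
      assume "length L < i"
      then have "?w ! i \<in> set R" and "x < ?w ! i"
        using i by (auto simp: nth_append nth_Cons split: nat.splits)
      then show False using assms by (metis UnCI less_asym)
    qed
    then show "i \<in> insert (length L) {i. i < length L \<and> (\<forall>j<i. L ! j < L ! i)}"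
      using i by (auto simp: nth_append)
  qed (use assms in \<open>auto simp: nth_append\<close>)
  then show ?thesis by (simp add: lr_maxima_def)
qed

lemma rl_maxima_eq_lr_maxima_rev: "rl_maxima w = lr_maxima (rev w)"
proof -
  let ?n = "length w"
  let ?R = "{i. i < ?n \<and> (\<forall>j. i < j \<and> j < ?n \<longrightarrow> w ! j < w ! i)}"
  let ?L = "{k. k < ?n \<and> (\<forall>j<k. rev w ! j < rev w ! k)}"
  have "?R = (\<lambda>k. ?n - Suc k) ` ?L"
  proof (intro set_eqI iffI)
    fix i assume i: "i \<in> ?R"
    have "rev w ! j < rev w ! (?n - Suc i)" if "j < ?n - Suc i" for j
    proof -
      have "i < ?n - Suc j" "?n - Suc j < ?n" using that by arith+
      then show ?thesis using i that by (simp add: rev_nth)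
    qed
    then have "?n - Suc i \<in> ?L" using i by auto
    moreover have "i = ?n - Suc (?n - Suc i)" using i by simp
    ultimately show "i \<in> (\<lambda>k. ?n - Suc k) ` ?L" by blast
  next
    fix i assume "i \<in> (\<lambda>k. ?n - Suc k) ` ?L"
    then obtain k where k: "k \<in> ?L" "i = ?n - Suc k" by blast
    have "w ! j < w ! i" if "i < j" "j < ?n" for j
    proof -
      have "k < ?n" using k(1) by simp
      then have "?n - Suc j < k" "k < ?n" using that k(2) by arith+
      then have "rev w ! (?n - Suc j) < rev w ! k" using k by blast
      then show ?thesis using that k by (simp add: rev_nth)
    qed
    then show "i \<in> ?R" using k by auto
  qed
  moreover have "inj_on (\<lambda>k. ?n - Suc k) ?L" by (auto simp: inj_on_def)
  ultimately show ?thesis by (simp add: rl_maxima_def lr_maxima_def card_image)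
qed

lemma rl_maxima_map:
  assumes "strict_mono_on (set w) h"
  shows "rl_maxima (map h w) = rl_maxima w"
  using assms by (simp add: rl_maxima_eq_lr_maxima_rev lr_maxima_map rev_map)

lemma rl_maxima_split_max:
  assumes "\<forall>y\<in>set L \<union> set R. y < x"
  shows "rl_maxima (L @ x # R) = Suc (rl_maxima R)"
proof -
  have "\<forall>y\<in>set (rev R) \<union> set (rev L). y < x" using assms by auto
  from lr_maxima_split_max[OF this] show ?thesis by (simp add: rl_maxima_eq_lr_maxima_rev)
qed

section \<open>Sums over permutations of order-invariant functions\<close>

definition order_invariant :: "(nat list \<Rightarrow> 'a) \<Rightarrow> bool" where
  "order_invariant g \<longleftrightarrow> (\<forall>w h. strict_mono_on (set w) h \<longrightarrow> g (map h w) = g w)"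

lemma order_invariant_cmult: "order_invariant g \<Longrightarrow> order_invariant (\<lambda>w. c * g w)"
  by (simp add: order_invariant_def)

definition perm_sum :: "(nat list \<Rightarrow> 'a::comm_monoid_add) \<Rightarrow> nat \<Rightarrow> 'a" where
  "perm_sum g k = (\<Sum>w\<in>permutations_of_set {0..<k}. g w)"

lemma sum_permutations_of_set_order_invariant:
  fixes g :: "nat list \<Rightarrow> 'a::comm_monoid_add"
  assumes S: "finite S" and g: "order_invariant g"
  shows "(\<Sum>w\<in>permutations_of_set S. g w) = perm_sum g (card S)"
proof -
  define xs where "xs = sorted_list_of_set S"
  define h where "h = (\<lambda>i. xs ! i)"
  have len: "length xs = card S" using S by (simp add: xs_def)
  have "sorted_wrt (<) xs" by (simp add: xs_def)
  then have mono: "strict_mono_on {0..<card S} h"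
    by (intro strict_mono_onI) (auto simp: h_def sorted_wrt_iff_nth_less len)
  have "h ` {0..<card S} = set xs" by (auto simp: h_def set_conv_nth len)
  then have img: "h ` {0..<card S} = S" using S by (simp add: xs_def)
  have inj: "inj_on h {0..<card S}" using mono by (rule strict_mono_on_imp_inj_on)
  have injm: "inj_on (map h) (permutations_of_set {0..<card S})"
    by (rule inj_onI) (use inj in \<open>auto simp: permutations_of_set_def inj_on_map_eq_map\<close>)
  have "(\<Sum>w\<in>permutations_of_set S. g w) = (\<Sum>w\<in>permutations_of_set {0..<card S}. g (map h w))"
    using sum.reindex[OF injm, of g] permutations_of_set_image_inj[OF inj] img by simp
  also have "\<dots> = perm_sum g (card S)"
    unfolding perm_sum_def
  proof (rule sum.cong[OF refl])
    fix w assume "w \<in> permutations_of_set {0..<card S}"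
    then have "strict_mono_on (set w) h"
      using mono by (auto simp: permutations_of_set_def intro: monotone_on_subset)
    then show "g (map h w) = g w" using g by (simp add: order_invariant_def)
  qed
  finally show ?thesis .
qed

lemma sum_permutations_of_set_split_at:
  fixes F :: "nat list \<Rightarrow> 'a::comm_monoid_add"
  assumes S: "finite S" and x: "x \<in> S"
  shows "(\<Sum>w\<in>permutations_of_set S. F w) =
    (\<Sum>T\<in>Pow (S - {x}). \<Sum>L\<in>permutations_of_set T. \<Sum>R\<in>permutations_of_set (S - {x} - T). F (L @ x # R))"
proof -
  let ?U = "S - {x}"
  let ?Q = "Sigma (Pow ?U) (\<lambda>T. permutations_of_set T \<times> permutations_of_set (?U - T))"
  let ?join = "\<lambda>(T::nat set, L, R). L @ x # R"
  have "bij_betw ?join ?Q (permutations_of_set S)"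
  proof (rule bij_betwI')
    fix a b assume a: "a \<in> ?Q" and b: "b \<in> ?Q"
    obtain T L R T' L' R' where ab: "a = (T, L, R)" "b = (T', L', R')" by (cases a; cases b) auto
    have "x \<notin> set L" "x \<notin> set R" "set L = T" "set L' = T'"
      using a b ab by (auto simp: permutations_of_set_def)
    then show "(?join a = ?join b) = (a = b)"
      using ab append_Cons_eq_iff[of x L R L' R'] by auto
  next
    fix a assume "a \<in> ?Q"
    then show "?join a \<in> permutations_of_set S"
      using x by (cases a) (auto simp: permutations_of_set_def)
  next
    fix w assume w: "w \<in> permutations_of_set S"
    then have "x \<in> set w" "distinct w" "set w = S" using x by (auto simp: permutations_of_set_def)
    then obtain L R where "w = L @ x # R" by (meson split_list)
    moreover have "(set L, L, R) \<in> ?Q"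
      using calculation \<open>distinct w\<close> \<open>set w = S\<close> by (auto simp: permutations_of_set_def)
    ultimately show "\<exists>a\<in>?Q. w = ?join a" by force
  qed
  then have "(\<Sum>w\<in>permutations_of_set S. F w) = (\<Sum>(T, L, R)\<in>?Q. F (L @ x # R))"
    by (simp add: sum.reindex_bij_betw[symmetric] case_prod_unfold)
  also have "\<dots> = (\<Sum>T\<in>Pow ?U. \<Sum>(L, R)\<in>permutations_of_set T \<times> permutations_of_set (?U - T). F (L @ x # R))"
    by (rule sum.Sigma[symmetric]) (use S in auto)
  finally show ?thesis by (simp add: sum.cartesian_product)
qed

lemma sum_Pow_card:
  fixes f :: "nat \<Rightarrow> 'a::comm_semiring_1"
  assumes U: "finite U"
  shows "(\<Sum>T\<in>Pow U. f (card T)) = (\<Sum>j\<le>card U. of_nat (card U choose j) * f j)"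
proof -
  have "(\<Sum>T\<in>Pow U. f (card T)) = (\<Sum>j\<le>card U. \<Sum>T\<in>{T. T \<in> Pow U \<and> card T = j}. f (card T))"
    by (rule sum.group[symmetric]) (use U in \<open>auto intro: card_mono\<close>)
  also have "\<dots> = (\<Sum>j\<le>card U. \<Sum>T\<in>{T. T \<subseteq> U \<and> card T = j}. f j)"
    by (intro sum.cong) auto
  finally show ?thesis using n_subsets[OF U] by simp
qed

lemma sum_permutations_of_set_split_product:
  fixes gL gR :: "nat list \<Rightarrow> 'a::comm_semiring_1"
  assumes S: "finite S" and x: "x \<in> S" and card_S: "card S = Suc n"
    and gL: "order_invariant gL" and gR: "order_invariant gR"
    and F: "\<And>L R. set L \<union> set R \<subseteq> S - {x} \<Longrightarrow> F (L @ x # R) = gL L * gR R"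
  shows "(\<Sum>w\<in>permutations_of_set S. F w) =
           (\<Sum>j\<le>n. of_nat (n choose j) * (perm_sum gL j * perm_sum gR (n - j)))"
proof -
  let ?U = "S - {x}"
  have fin_U: "finite ?U" and card_U: "card ?U = n" using S x card_S by auto
  have "(\<Sum>L\<in>permutations_of_set T. \<Sum>R\<in>permutations_of_set (?U - T). F (L @ x # R)) =
          perm_sum gL (card T) * perm_sum gR (n - card T)" if T: "T \<in> Pow ?U" for T
  proof -
    have "(\<Sum>L\<in>permutations_of_set T. \<Sum>R\<in>permutations_of_set (?U - T). F (L @ x # R)) =
            (\<Sum>L\<in>permutations_of_set T. gL L) * (\<Sum>R\<in>permutations_of_set (?U - T). gR R)"
      using T by (simp add: sum_product F permutations_of_set_def)
    also have "\<dots> = perm_sum gL (card T) * perm_sum gR (card (?U - T))"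
      using T fin_U rev_finite_subset[OF fin_U, of T]
      by (simp add: sum_permutations_of_set_order_invariant gL gR)
    finally show ?thesis using T fin_U card_U by (simp add: card_Diff_subset finite_subset)
  qed
  then show ?thesis
    using sum_permutations_of_set_split_at[OF S x, of F]
          sum_Pow_card[OF fin_U, of "\<lambda>j. perm_sum gL j * perm_sum gR (n - j)"] card_U
    by simp
qed

lemma perm_sum_0 [simp]: "perm_sum g 0 = g []"
  by (simp add: perm_sum_def)

lemma perm_sum_cmult: "perm_sum (\<lambda>w. c * g w) = (\<lambda>k. (c::'a::comm_semiring_1) * perm_sum g k)"
  by (simp add: perm_sum_def[abs_def] sum_distrib_left)

lemma perm_sum_Suc_cong:
  assumes "\<And>w. w \<noteq> [] \<Longrightarrow> g w = g' w"
  shows "perm_sum g (Suc k) = perm_sum g' (Suc k)"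
  unfolding perm_sum_def
proof (rule sum.cong[OF refl])
  fix w assume "w \<in> permutations_of_set {0..<Suc k}"
  then have "w \<noteq> []" by (auto simp: permutations_of_set_def)
  then show "g w = g' w" by (rule assms)
qed

section \<open>Exponential generating functions\<close>

definition egf :: "(nat \<Rightarrow> 'a::field_char_0) \<Rightarrow> 'a fps" where
  "egf s = Abs_fps (\<lambda>n. s n / fact n)"

lemma egf_mult:
  fixes x y :: "nat \<Rightarrow> 'a::field_char_0"
  shows "egf x * egf y = egf (\<lambda>n. \<Sum>j\<le>n. of_nat (n choose j) * (x j * y (n - j)))"
proof (rule fps_ext)
  fix n
  have "x j / fact j * (y (n - j) / fact (n - j)) = of_nat (n choose j) * (x j * y (n - j)) / fact n"
    if "j \<le> n" for j
    using that by (simp add: binomial_fact field_simps)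
  then show "fps_nth (egf x * egf y) n = fps_nth (egf (\<lambda>n. \<Sum>j\<le>n. of_nat (n choose j) * (x j * y (n - j)))) n"
    by (simp add: egf_def fps_mult_nth atLeast0AtMost sum_divide_distrib)
qed

lemma egf_deriv: "fps_deriv (egf s) = egf (\<lambda>n. s (Suc n))"
  by (rule fps_ext) (simp add: egf_def fps_deriv_nth fact_Suc field_simps del: of_nat_Suc)

lemma egf_cmult: "egf (\<lambda>n. c * s n) = fps_const c * egf s"
  by (rule fps_ext) (simp add: egf_def)

lemma fps_deriv_egf_perm_sum_split_max:
  fixes gL gR :: "nat list \<Rightarrow> 'a::field_char_0"
  assumes "order_invariant gL" "order_invariant gR"
    and "\<And>L R x. \<forall>y\<in>set L \<union> set R. y < x \<Longrightarrow> F (L @ x # R) = gL L * gR R"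
  shows "fps_deriv (egf (perm_sum F)) = egf (perm_sum gL) * egf (perm_sum gR)"
proof -
  have "perm_sum F (Suc n) = (\<Sum>j\<le>n. of_nat (n choose j) * (perm_sum gL j * perm_sum gR (n - j)))" for n
    unfolding perm_sum_def[of F]
    by (rule sum_permutations_of_set_split_product[OF _ _ _ assms(1,2), of _ n]) (auto intro!: assms(3))
  then show ?thesis by (simp add: egf_deriv egf_mult)
qed

lemma fps_deriv_egf_perm_sum_split_min:
  fixes gL gR :: "nat list \<Rightarrow> 'a::field_char_0"
  assumes "order_invariant gL" "order_invariant gR"
    and "\<And>L R x. \<forall>y\<in>set L \<union> set R. x < y \<Longrightarrow> F (L @ x # R) = gL L * gR R"
  shows "fps_deriv (egf (perm_sum F)) = egf (perm_sum gL) * egf (perm_sum gR)"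
proof -
  have "perm_sum F (Suc n) = (\<Sum>j\<le>n. of_nat (n choose j) * (perm_sum gL j * perm_sum gR (n - j)))" for n
    unfolding perm_sum_def[of F]
    by (rule sum_permutations_of_set_split_product[OF _ _ _ assms(1,2), of _ 0]) (auto intro!: assms(3))
  then show ?thesis by (simp add: egf_deriv egf_mult)
qed

section \<open>Uniqueness of solutions of formal differential equations\<close>

lemma fps_nth_mult_cong:
  assumes "\<And>i. i \<le> n \<Longrightarrow> fps_nth X i = fps_nth X' i" "\<And>i. i \<le> n \<Longrightarrow> fps_nth Y i = fps_nth Y' i"
  shows "fps_nth (X * Y) n = fps_nth (X' * Y') n"
  unfolding fps_mult_nth by (rule sum.cong) (auto simp: assms)

lemma fps_nth_Suc_eq_deriv:
  fixes X :: "'a::field_char_0 fps"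
  shows "fps_nth X (Suc n) = fps_nth (fps_deriv X) n / of_nat (Suc n)"
  by (simp del: of_nat_Suc)

lemma fps_linear_ode_unique:
  fixes X Y h :: "'a::field_char_0 fps"
  assumes dX: "fps_deriv X = X * h" and dY: "fps_deriv Y = Y * h"
    and init: "fps_nth X 0 = fps_nth Y 0"
  shows "X = Y"
proof -
  have "\<forall>m\<le>n. fps_nth X m = fps_nth Y m" for n
  proof (induction n)
    case (Suc n)
    have "fps_nth (X * h) n = fps_nth (Y * h) n"
      by (rule fps_nth_mult_cong) (use Suc in auto)
    then have "fps_nth X (Suc n) = fps_nth Y (Suc n)"
      by (simp only: fps_nth_Suc_eq_deriv dX dY)
    then show ?case using Suc by (auto simp: le_Suc_eq)
  qed (use init in simp)
  then show ?thesis by (auto intro: fps_ext)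
qed

lemma fps_ode_system_unique:
  fixes A A' B B' K K' :: "'a::field_char_0 fps"
  assumes dA: "fps_deriv A = A * (fps_const a + K)" "fps_deriv A' = A' * (fps_const a + K')"
    and dB: "fps_deriv B = B * (fps_const b + K)" "fps_deriv B' = B' * (fps_const b + K')"
    and dK: "fps_deriv K = fps_const p * (B * A)" "fps_deriv K' = fps_const p * (B' * A')"
    and init: "fps_nth A 0 = fps_nth A' 0" "fps_nth B 0 = fps_nth B' 0" "fps_nth K 0 = fps_nth K' 0"
  shows "A = A'" and "B = B'" and "K = K'"
proof -
  have "\<forall>m\<le>n. fps_nth A m = fps_nth A' m \<and> fps_nth B m = fps_nth B' m \<and> fps_nth K m = fps_nth K' m"
    for n
  proof (induction n)
    case (Suc n)
    have "fps_nth (fps_const c + K) i = fps_nth (fps_const c + K') i" if "i \<le> n" for i c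
      using Suc that by simp
    then have "fps_nth (A * (fps_const a + K)) n = fps_nth (A' * (fps_const a + K')) n"
      and "fps_nth (B * (fps_const b + K)) n = fps_nth (B' * (fps_const b + K')) n"
      and "fps_nth (fps_const p * (B * A)) n = fps_nth (fps_const p * (B' * A')) n"
      by (auto intro!: fps_nth_mult_cong simp: Suc[rule_format])
    then have "fps_nth A (Suc n) = fps_nth A' (Suc n)" "fps_nth B (Suc n) = fps_nth B' (Suc n)"
      "fps_nth K (Suc n) = fps_nth K' (Suc n)"
      by (simp_all only: fps_nth_Suc_eq_deriv dA dB dK)
    then show ?case using Suc by (auto simp: le_Suc_eq)
  qed (use init in simp)
  then show "A = A'" "B = B'" "K = K'" by (auto intro: fps_ext)
qed

section \<open>Powers of formal power series with arbitrary exponents\<close>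

lemma fps_deriv_fps_ln_compose:
  fixes G :: "'a::field_char_0 fps"
  assumes G0: "fps_nth G 0 = 1"
  shows "fps_deriv (fps_ln 1 oo (G - 1)) = inverse G * fps_deriv G"
proof -
  have g0: "fps_nth (G - 1) 0 = 0" using G0 by simp
  have "fps_deriv (fps_ln 1 oo (G - 1)) = (fps_deriv (fps_ln 1) oo (G - 1)) * fps_deriv (G - 1)"
    by (rule fps_compose_deriv[OF g0])
  also have "fps_deriv (fps_ln (1::'a)) = inverse (1 + fps_X)"
    by (simp add: fps_ln_deriv)
  also have "inverse (1 + fps_X) oo (G - 1) = inverse ((1 + fps_X) oo (G - 1))"
    by (rule fps_inverse_compose[OF g0]) simp
  also have "(1 + fps_X) oo (G - 1) = G"
    using g0 by (simp add: fps_compose_add_distrib)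
  finally show ?thesis by simp
qed

lemma fps_cpow_nth_0 [simp]: "fps_nth (fps_cpow c G) 0 = 1"
  by (simp add: fps_cpow_def)

lemma fps_cpow_deriv:
  fixes G :: "'a::field_char_0 fps"
  assumes "fps_nth G 0 = 1"
  shows "fps_deriv (fps_cpow c G) = fps_cpow c G * (fps_const c * (inverse G * fps_deriv G))"
proof -
  let ?L = "fps_ln 1 oo (G - 1)"
  have "fps_deriv (fps_cpow c G) = (fps_deriv (fps_exp c) oo ?L) * fps_deriv ?L"
    unfolding fps_cpow_def by (rule fps_compose_deriv) simp
  also have "fps_deriv (fps_exp c) oo ?L = fps_const c * fps_cpow c G"
    by (simp add: fps_compose_mult_distrib fps_cpow_def)
  finally show ?thesis by (simp add: fps_deriv_fps_ln_compose[OF assms] mult_ac)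
qed

lemma fps_cpow_add: "fps_cpow a G * fps_cpow b G = fps_cpow (a + b) G"
  by (simp add: fps_cpow_def fps_exp_add_mult fps_compose_mult_distrib)

lemma fps_cpow_minus_one:
  fixes G :: "'a::field_char_0 fps"
  assumes G0: "fps_nth G 0 = 1"
  shows "fps_cpow (-1) G = inverse G"
proof (rule fps_linear_ode_unique)
  show "fps_deriv (fps_cpow (-1) G) = fps_cpow (-1) G * (- (inverse G * fps_deriv G))"
    using G0 by (simp add: fps_cpow_deriv flip: fps_const_neg)
  show "fps_deriv (inverse G) = inverse G * (- (inverse G * fps_deriv G))"
    using G0 by (simp add: fps_inverse_deriv power2_eq_square mult_ac)
qed (use G0 in simp)

section \<open>Permutations as words\<close>

lemma prod_bool_pairs:
  fixes g :: "bool \<Rightarrow> bool \<Rightarrow> 'a::comm_monoid_mult"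
  assumes "finite I"
  shows "(\<Prod>i\<in>I. g (P i) (Q i)) =
           g True True ^ card {i\<in>I. P i \<and> Q i} * g True False ^ card {i\<in>I. P i \<and> \<not> Q i} *
           g False True ^ card {i\<in>I. \<not> P i \<and> Q i} * g False False ^ card {i\<in>I. \<not> P i \<and> \<not> Q i}"
  using assms
proof (induction I rule: finite_induct)
  case (insert a F)
  have card_insert: "card {i \<in> insert a F. R i} = (if R a then Suc (card {i\<in>F. R i}) else card {i\<in>F. R i})"
    for R
  proof -
    have "{i \<in> insert a F. R i} = (if R a then insert a {i\<in>F. R i} else {i\<in>F. R i})" by auto
    then show ?thesis using insert by (simp add: card_insert_disjoint)
  qed
  show ?case
    unfolding prod.insert[OF insert(1,2)] insert.IH
      card_insert[of "\<lambda>i. P i \<and> Q i"] card_insert[of "\<lambda>i. P i \<and> \<not> Q i"]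
      card_insert[of "\<lambda>i. \<not> P i \<and> Q i"] card_insert[of "\<lambda>i. \<not> P i \<and> \<not> Q i"]
    by (cases "P a"; cases "Q a") (simp_all add: mult_ac)
qed simp

lemma Collect_atLeastAtMost_1_eq_image_Suc: "{i\<in>{1..m}. P i} = Suc ` {k. k < m \<and> P (Suc k)}"
  by (auto simp: image_iff) (metis Suc_le_D Suc_le_mono le_simps(3))

context
  fixes m :: nat and \<sigma> :: "nat \<Rightarrow> nat"
  assumes \<sigma>: "\<sigma> permutes {1..m}"
begin

abbreviation (input) "e\<sigma> \<equiv> ext_perm m \<sigma>"

lemma ext_perm_0 [simp]: "e\<sigma> 0 = 0" and ext_perm_Suc [simp]: "e\<sigma> (Suc m) = 0"
  by (simp_all add: ext_perm_def)

lemma ext_perm_neq: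
  assumes i: "i \<in> {1..m}" and "j \<noteq> i"
  shows "e\<sigma> j \<noteq> e\<sigma> i"
proof (cases "j \<in> {1..m}")
  case True
  then show ?thesis using assms permutes_inj[OF \<sigma>] by (auto simp: ext_perm_def inj_eq)
next
  case False
  then show ?thesis using permutes_in_image[OF \<sigma>, of i] i by (auto simp: ext_perm_def)
qed

lemma shape_weight_perm_word:
  "shape_weight f False False (map \<sigma> [1..<Suc m]) =
     (\<Prod>i\<in>{1..m}. f (e\<sigma> i < e\<sigma> (i - 1)) (e\<sigma> i < e\<sigma> (Suc i)))"
proof -
  have "shape_weight f False False (map \<sigma> [1..<Suc m]) =
          (\<Prod>k<m. f (e\<sigma> (Suc k) < e\<sigma> k) (e\<sigma> (Suc k) < e\<sigma> (Suc (Suc k))))"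
    unfolding shape_weight_eq_prod
    by (intro prod.cong) (auto simp: ext_perm_def nth_append simp del: upt_Suc split: nat.split)
  also have "\<dots> = (\<Prod>i\<in>{1..m}. f (e\<sigma> i < e\<sigma> (i - 1)) (e\<sigma> i < e\<sigma> (Suc i)))"
    by (simp only: One_nat_def prod.atLeast1_atMost_eq) simp
  finally show ?thesis .
qed

lemma valleysV_eq_card:
  "valleysV m \<sigma> = card {i\<in>{1..m}. e\<sigma> i < e\<sigma> (i - 1) \<and> e\<sigma> i < e\<sigma> (Suc i)}"
proof -
  have "{i. 1 < i \<and> i < m \<and> e\<sigma> (i - 1) > e\<sigma> i \<and> e\<sigma> i < e\<sigma> (i + 1)} =
        {i\<in>{1..m}. e\<sigma> i < e\<sigma> (i - 1) \<and> e\<sigma> i < e\<sigma> (Suc i)}"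
  proof (intro set_eqI iffI)
    fix i assume "i \<in> {i\<in>{1..m}. e\<sigma> i < e\<sigma> (i - 1) \<and> e\<sigma> i < e\<sigma> (Suc i)}"
    then show "i \<in> {i. 1 < i \<and> i < m \<and> e\<sigma> (i - 1) > e\<sigma> i \<and> e\<sigma> i < e\<sigma> (i + 1)}"
      by (cases "i = 1"; cases "i = m") auto
  qed auto
  then show ?thesis by (simp add: valleysV_def Let_def)
qed

lemma rdd_eq_card:
  "rdd m \<sigma> = card {i\<in>{1..m}. e\<sigma> i < e\<sigma> (i - 1) \<and> \<not> e\<sigma> i < e\<sigma> (Suc i)}"
proof -
  have "{i. 1 < i \<and> i \<le> m \<and> e\<sigma> (i - 1) > e\<sigma> i \<and> e\<sigma> i > e\<sigma> (i + 1)} =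
        {i\<in>{1..m}. e\<sigma> i < e\<sigma> (i - 1) \<and> \<not> e\<sigma> i < e\<sigma> (Suc i)}"
  proof (intro set_eqI iffI)
    fix i assume i: "i \<in> {i\<in>{1..m}. e\<sigma> i < e\<sigma> (i - 1) \<and> \<not> e\<sigma> i < e\<sigma> (Suc i)}"
    then have "e\<sigma> (Suc i) \<noteq> e\<sigma> i" by (simp add: ext_perm_neq)
    then show "i \<in> {i. 1 < i \<and> i \<le> m \<and> e\<sigma> (i - 1) > e\<sigma> i \<and> e\<sigma> i > e\<sigma> (i + 1)}"
      using i by (cases "i = 1") auto
  qed auto
  then show ?thesis by (simp add: rdd_def Let_def)
qed

lemma lda_eq_card:
  "lda m \<sigma> = card {i\<in>{1..m}. \<not> e\<sigma> i < e\<sigma> (i - 1) \<and> e\<sigma> i < e\<sigma> (Suc i)}"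
proof -
  have "{i. 1 \<le> i \<and> i < m \<and> e\<sigma> (i - 1) < e\<sigma> i \<and> e\<sigma> i < e\<sigma> (i + 1)} =
        {i\<in>{1..m}. \<not> e\<sigma> i < e\<sigma> (i - 1) \<and> e\<sigma> i < e\<sigma> (Suc i)}"
  proof (intro set_eqI iffI)
    fix i assume i: "i \<in> {i\<in>{1..m}. \<not> e\<sigma> i < e\<sigma> (i - 1) \<and> e\<sigma> i < e\<sigma> (Suc i)}"
    then have "e\<sigma> (i - 1) \<noteq> e\<sigma> i" by (intro ext_perm_neq) auto
    then show "i \<in> {i. 1 \<le> i \<and> i < m \<and> e\<sigma> (i - 1) < e\<sigma> i \<and> e\<sigma> i < e\<sigma> (i + 1)}"
      using i by (cases "i = m") auto
  qed auto
  then show ?thesis by (simp add: lda_def Let_def)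
qed

lemma peaksW_eq_card:
  "peaksW m \<sigma> = card {i\<in>{1..m}. \<not> e\<sigma> i < e\<sigma> (i - 1) \<and> \<not> e\<sigma> i < e\<sigma> (Suc i)}"
proof -
  have "{i\<in>{1..m}. e\<sigma> (i - 1) < e\<sigma> i \<and> e\<sigma> i > e\<sigma> (i + 1)} =
        {i\<in>{1..m}. \<not> e\<sigma> i < e\<sigma> (i - 1) \<and> \<not> e\<sigma> i < e\<sigma> (Suc i)}"
  proof (intro set_eqI iffI)
    fix i assume i: "i \<in> {i\<in>{1..m}. \<not> e\<sigma> i < e\<sigma> (i - 1) \<and> \<not> e\<sigma> i < e\<sigma> (Suc i)}"
    have "e\<sigma> (i - 1) \<noteq> e\<sigma> i" "e\<sigma> (Suc i) \<noteq> e\<sigma> i"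
      using i by (intro ext_perm_neq; auto)+
    then show "i \<in> {i\<in>{1..m}. e\<sigma> (i - 1) < e\<sigma> i \<and> e\<sigma> i > e\<sigma> (i + 1)}"
      using i by auto
  qed auto
  then show ?thesis by (simp add: peaksW_def Let_def)
qed

lemma peaksW_eq_Suc_valleysV:
  assumes "m \<ge> 1"
  shows "peaksW m \<sigma> = Suc (valleysV m \<sigma>)"
proof -
  let ?P = "\<lambda>i. e\<sigma> i < e\<sigma> (i - 1)" and ?Q = "\<lambda>i. e\<sigma> i < e\<sigma> (Suc i)"
  have "distinct (map \<sigma> [1..<Suc m])" using permutes_inj_on[OF \<sigma>] by (simp add: distinct_map)
  then have "2 = shape_weight peak_valley_factor False False (map \<sigma> [1..<Suc m])"
    using assms by (simp add: shape_weight_peak_valley_factor peak_valley_factor_def)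
  also have "\<dots> = (\<Prod>i\<in>{1..m}. peak_valley_factor (?P i) (?Q i))"
    by (rule shape_weight_perm_word)
  also have "\<dots> = peak_valley_factor True True ^ card {i\<in>{1..m}. ?P i \<and> ?Q i} *
      peak_valley_factor True False ^ card {i\<in>{1..m}. ?P i \<and> \<not> ?Q i} *
      peak_valley_factor False True ^ card {i\<in>{1..m}. \<not> ?P i \<and> ?Q i} *
      peak_valley_factor False False ^ card {i\<in>{1..m}. \<not> ?P i \<and> \<not> ?Q i}"
    by (rule prod_bool_pairs) simp
  also have "\<dots> = (1/2) ^ valleysV m \<sigma> * 2 ^ peaksW m \<sigma>"
    unfolding valleysV_eq_card peaksW_eq_card by (simp add: peak_valley_factor_def)
  finally have "(2::real) ^ peaksW m \<sigma> = 2 ^ Suc (valleysV m \<sigma>)"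
    by (simp add: field_simps power_one_over)
  then show ?thesis by (subst (asm) power_inject_exp) simp_all
qed

lemma LRmax_eq_lr_maxima: "LRmax m \<sigma> = lr_maxima (map \<sigma> [1..<Suc m])"
proof -
  have "(\<forall>j\<in>{1..<Suc k}. \<sigma> j < \<sigma> (Suc k)) \<longleftrightarrow> (\<forall>j<k. \<sigma> (Suc j) < \<sigma> (Suc k))" for k
    using less_Suc_eq_0_disj by auto
  then have "{i\<in>{1..m}. \<forall>j\<in>{1..<i}. \<sigma> j < \<sigma> i} =
               Suc ` {k. k < m \<and> (\<forall>j<k. \<sigma> (Suc j) < \<sigma> (Suc k))}"
    unfolding Collect_atLeastAtMost_1_eq_image_Suc by simp
  then show ?thesis by (simp add: LRmax_def lr_maxima_def card_image del: upt_Suc cong: conj_cong)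
qed

lemma RLmax_eq_rl_maxima: "RLmax m \<sigma> = rl_maxima (map \<sigma> [1..<Suc m])"
proof -
  have "(\<forall>j\<in>{Suc k<..m}. \<sigma> j < \<sigma> (Suc k)) \<longleftrightarrow> (\<forall>j. k < j \<and> j < m \<longrightarrow> \<sigma> (Suc j) < \<sigma> (Suc k))"
    for k using Suc_less_eq2 by auto
  then have "{i\<in>{1..m}. \<forall>j\<in>{i<..m}. \<sigma> j < \<sigma> i} =
               Suc ` {k. k < m \<and> (\<forall>j. k < j \<and> j < m \<longrightarrow> \<sigma> (Suc j) < \<sigma> (Suc k))}"
    unfolding Collect_atLeastAtMost_1_eq_image_Suc by simp
  then show ?thesis by (simp add: RLmax_def rl_maxima_def card_image del: upt_Suc)
qed

end

lemma bij_betw_permutes_permutations_of_set: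
  "bij_betw (\<lambda>\<sigma>. map \<sigma> [1..<Suc m]) {\<sigma>. \<sigma> permutes {1..m}} (permutations_of_set {1..m})"
proof -
  let ?f = "\<lambda>\<sigma>. map \<sigma> [1..<Suc m]" and ?P = "{\<sigma>. \<sigma> permutes {1..m}}"
  have inj: "inj_on ?f ?P"
  proof (rule inj_onI)
    fix \<sigma> \<tau> assume "\<sigma> \<in> ?P" "\<tau> \<in> ?P" and eq: "?f \<sigma> = ?f \<tau>"
    show "\<sigma> = \<tau>"
    proof
      fix i show "\<sigma> i = \<tau> i"
        using eq \<open>\<sigma> \<in> ?P\<close> \<open>\<tau> \<in> ?P\<close>
        by (cases "i \<in> {1..m}") (auto simp: map_eq_conv permutes_not_in simp del: upt_Suc)
    qed
  qed
  have sub: "?f ` ?P \<subseteq> permutations_of_set {1..m}"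
  proof
    fix w assume "w \<in> ?f ` ?P"
    then obtain \<sigma> where \<sigma>: "\<sigma> permutes {1..m}" and w: "w = ?f \<sigma>" by blast
    have "set [1..<Suc m] = {1..m}" by auto
    then show "w \<in> permutations_of_set {1..m}"
      using permutes_inj_on[OF \<sigma>] permutes_image[OF \<sigma>]
      by (simp add: w permutations_of_set_def distinct_map del: upt_Suc)
  qed
  have "card (?f ` ?P) = card (permutations_of_set {1..m})"
    using card_image[OF inj] by (simp add: card_permutations)
  then have "?f ` ?P = permutations_of_set {1..m}"
    by (intro card_subset_eq sub) simp
  with inj show ?thesis by (simp add: bij_betw_def)
qed

section \<open>The differential equations of the generating functions\<close>

text \<open>A valley carries \<open>u1 * u2\<close>: since there is one more peak than valleys, the factor
  \<open>u2 ^ (W - 1)\<close> can be distributed over the valleys.\<close>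

definition local_factor :: "'a \<Rightarrow> 'a \<Rightarrow> 'a \<Rightarrow> 'a \<Rightarrow> bool \<Rightarrow> bool \<Rightarrow> 'a::comm_ring_1" where
  "local_factor u1 u2 u3 u4 a b = (if a then if b then u1 * u2 else u3 else if b then u4 else 1)"

context
  fixes u1 u2 u3 u4 :: "'a::field_char_0"
begin

abbreviation (input) "\<phi> \<equiv> local_factor u1 u2 u3 u4"

text \<open>The flags \<open>bl\<close>, \<open>br\<close> of \<^const>\<open>shape_weight\<close> say whether the letters just outside
  a factor are larger: a factor to the left of a larger letter has 0 on its left (\<open>False\<close>) and
  that letter on its right (\<open>True\<close>).\<close>

definition lr_weight :: "'a \<Rightarrow> nat list \<Rightarrow> 'a" where
  "lr_weight \<alpha> w = shape_weight \<phi> False True w * \<alpha> ^ lr_maxima w"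

definition rl_weight :: "'a \<Rightarrow> nat list \<Rightarrow> 'a" where
  "rl_weight \<beta> w = shape_weight \<phi> True False w * \<beta> ^ rl_maxima w"

definition gap_weight :: "nat list \<Rightarrow> 'a" where
  "gap_weight w = shape_weight \<phi> True True w"

definition tail_weight :: "'a \<Rightarrow> nat list \<Rightarrow> 'a" where
  "tail_weight c w = (if w = [] then c else gap_weight w)"

definition perm_weight :: "'a \<Rightarrow> 'a \<Rightarrow> nat list \<Rightarrow> 'a" where
  "perm_weight \<alpha> \<beta> w = shape_weight \<phi> False False w * \<alpha> ^ (lr_maxima w - 1) * \<beta> ^ (rl_maxima w - 1)"

lemma order_invariant_lr_weight: "order_invariant (lr_weight \<alpha>)"
  unfolding order_invariant_def lr_weight_def by (auto simp: shape_weight_map lr_maxima_map)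

lemma order_invariant_rl_weight: "order_invariant (rl_weight \<beta>)"
  unfolding order_invariant_def rl_weight_def by (auto simp: shape_weight_map rl_maxima_map)

lemma order_invariant_tail_weight: "order_invariant (tail_weight c)"
  unfolding order_invariant_def tail_weight_def gap_weight_def by (auto simp: shape_weight_map)

definition egf_lr :: "'a \<Rightarrow> 'a fps" where "egf_lr \<alpha> = egf (perm_sum (lr_weight \<alpha>))"
definition egf_rl :: "'a \<Rightarrow> 'a fps" where "egf_rl \<beta> = egf (perm_sum (rl_weight \<beta>))"
definition egf_gap :: "'a fps" where "egf_gap = egf (perm_sum gap_weight)"

lemma egf_tail_weight: "egf (perm_sum (tail_weight c)) = fps_const c + (egf_gap - 1)"
proof (rule fps_ext)
  fix n
  show "fps_nth (egf (perm_sum (tail_weight c))) n = fps_nth (fps_const c + (egf_gap - 1)) n"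
  proof (cases n)
    case (Suc k)
    have "perm_sum (tail_weight c) (Suc k) = perm_sum gap_weight (Suc k)"
      by (rule perm_sum_Suc_cong) (simp add: tail_weight_def)
    then show ?thesis using Suc by (simp add: egf_def egf_gap_def)
  qed (simp add: egf_def egf_gap_def tail_weight_def gap_weight_def)
qed

lemma fps_deriv_egf_lr:
  "fps_deriv (egf_lr \<alpha>) = egf_lr \<alpha> * (fps_const \<alpha> * (fps_const u4 + (egf_gap - 1)))"
proof -
  have "fps_deriv (egf_lr \<alpha>) = egf_lr \<alpha> * egf (perm_sum (\<lambda>w. \<alpha> * tail_weight u4 w))"
    unfolding egf_lr_def
  proof (rule fps_deriv_egf_perm_sum_split_max)
    fix L R :: "nat list" and x :: nat assume max: "\<forall>y\<in>set L \<union> set R. y < x"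
    show "lr_weight \<alpha> (L @ x # R) = lr_weight \<alpha> L * (\<alpha> * tail_weight u4 R)"
      unfolding lr_weight_def tail_weight_def gap_weight_def
        shape_weight_split_max[OF max] lr_maxima_split_max[OF max]
      by (simp add: local_factor_def mult_ac)
  qed (intro order_invariant_lr_weight order_invariant_cmult order_invariant_tail_weight)+
  then show ?thesis by (simp add: perm_sum_cmult egf_cmult egf_tail_weight)
qed

lemma fps_deriv_egf_rl:
  "fps_deriv (egf_rl \<beta>) = egf_rl \<beta> * (fps_const \<beta> * (fps_const u3 + (egf_gap - 1)))"
proof -
  have "fps_deriv (egf_rl \<beta>) = egf (perm_sum (\<lambda>w. \<beta> * tail_weight u3 w)) * egf_rl \<beta>"
    unfolding egf_rl_def
  proof (rule fps_deriv_egf_perm_sum_split_max)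
    fix L R :: "nat list" and x :: nat assume max: "\<forall>y\<in>set L \<union> set R. y < x"
    show "rl_weight \<beta> (L @ x # R) = (\<beta> * tail_weight u3 L) * rl_weight \<beta> R"
      unfolding rl_weight_def tail_weight_def gap_weight_def
        shape_weight_split_max[OF max] rl_maxima_split_max[OF max]
      by (simp add: local_factor_def mult_ac)
  qed (intro order_invariant_rl_weight order_invariant_cmult order_invariant_tail_weight)+
  then show ?thesis by (simp add: perm_sum_cmult egf_cmult egf_tail_weight mult.commute)
qed

lemma fps_deriv_egf_gap: "fps_deriv egf_gap = fps_const (u1 * u2) * (egf_rl 1 * egf_lr 1)"
proof -
  have "fps_deriv egf_gap = egf_rl 1 * egf (perm_sum (\<lambda>w. (u1 * u2) * lr_weight 1 w))"
    unfolding egf_gap_def egf_rl_def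
  proof (rule fps_deriv_egf_perm_sum_split_min)
    fix L R :: "nat list" and x :: nat assume min: "\<forall>y\<in>set L \<union> set R. x < y"
    show "gap_weight (L @ x # R) = rl_weight 1 L * ((u1 * u2) * lr_weight 1 R)"
      unfolding gap_weight_def lr_weight_def rl_weight_def shape_weight_split_min[OF min]
      by (simp add: local_factor_def mult_ac)
  qed (intro order_invariant_rl_weight order_invariant_cmult order_invariant_lr_weight)+
  then show ?thesis by (simp only: perm_sum_cmult egf_cmult) (simp add: egf_lr_def mult_ac)
qed

lemma fps_deriv_egf_perm_weight: "fps_deriv (egf (perm_sum (perm_weight \<alpha> \<beta>))) = egf_lr \<alpha> * egf_rl \<beta>"
  unfolding egf_lr_def egf_rl_def
proof (rule fps_deriv_egf_perm_sum_split_max)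
  fix L R :: "nat list" and x :: nat assume max: "\<forall>y\<in>set L \<union> set R. y < x"
  show "perm_weight \<alpha> \<beta> (L @ x # R) = lr_weight \<alpha> L * rl_weight \<beta> R"
    unfolding perm_weight_def lr_weight_def rl_weight_def shape_weight_split_max[OF max]
      lr_maxima_split_max[OF max] rl_maxima_split_max[OF max]
    by (simp add: local_factor_def mult_ac)
qed (rule order_invariant_lr_weight order_invariant_rl_weight)+

lemma perm_weight_perm_word:
  assumes \<sigma>: "\<sigma> permutes {1..m}" and "m \<ge> 1"
  shows "u1 ^ valleysV m \<sigma> * u2 ^ (peaksW m \<sigma> - 1) * u3 ^ rdd m \<sigma> * u4 ^ lda m \<sigma> *
           \<alpha> ^ (LRmax m \<sigma> - 1) * \<beta> ^ (RLmax m \<sigma> - 1) = perm_weight \<alpha> \<beta> (map \<sigma> [1..<Suc m])"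
proof -
  let ?P = "\<lambda>i. ext_perm m \<sigma> i < ext_perm m \<sigma> (i - 1)"
    and ?Q = "\<lambda>i. ext_perm m \<sigma> i < ext_perm m \<sigma> (Suc i)"
  have "shape_weight \<phi> False False (map \<sigma> [1..<Suc m]) = (\<Prod>i\<in>{1..m}. \<phi> (?P i) (?Q i))"
    by (rule shape_weight_perm_word[OF \<sigma>])
  also have "\<dots> = \<phi> True True ^ card {i\<in>{1..m}. ?P i \<and> ?Q i} * \<phi> True False ^ card {i\<in>{1..m}. ?P i \<and> \<not> ?Q i} *
      \<phi> False True ^ card {i\<in>{1..m}. \<not> ?P i \<and> ?Q i} * \<phi> False False ^ card {i\<in>{1..m}. \<not> ?P i \<and> \<not> ?Q i}"
    by (rule prod_bool_pairs) simp
  also have "\<dots> = (u1 * u2) ^ valleysV m \<sigma> * u3 ^ rdd m \<sigma> * u4 ^ lda m \<sigma>"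
    unfolding valleysV_eq_card[OF \<sigma>] rdd_eq_card[OF \<sigma>] lda_eq_card[OF \<sigma>] by (simp add: local_factor_def)
  finally show ?thesis
    unfolding perm_weight_def LRmax_eq_lr_maxima[OF \<sigma>] RLmax_eq_rl_maxima[OF \<sigma>]
      peaksW_eq_Suc_valleysV[OF assms]
    by (simp add: power_mult_distrib mult_ac)
qed

lemma Pn_eq_perm_sum: "Pn n u1 u2 u3 u4 \<alpha> \<beta> = perm_sum (perm_weight \<alpha> \<beta>) (Suc n)"
proof -
  have "Pn n u1 u2 u3 u4 \<alpha> \<beta> = (\<Sum>\<sigma>\<in>{\<sigma>. \<sigma> permutes {1..Suc n}}. perm_weight \<alpha> \<beta> (map \<sigma> [1..<Suc (Suc n)]))"
    unfolding Pn_def Suc_eq_plus1[symmetric] by (intro sum.cong refl perm_weight_perm_word) auto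
  also have "\<dots> = (\<Sum>w\<in>permutations_of_set {1..Suc n}. perm_weight \<alpha> \<beta> w)"
    by (rule sum.reindex_bij_betw[OF bij_betw_permutes_permutations_of_set])
  also have "\<dots> = perm_sum (perm_weight \<alpha> \<beta>) (Suc n)"
    unfolding perm_weight_def
    by (subst sum_permutations_of_set_order_invariant) (auto simp: order_invariant_def shape_weight_map
        lr_maxima_map rl_maxima_map)
  finally show ?thesis .
qed

section \<open>The closed form\<close>

abbreviation (input) "G \<equiv> bracket_fps u1 u2 u3 u4"

lemma bracket_fps_nth_0 [simp]: "fps_nth G 0 = 1"
  and bracket_fps_nth_1 [simp]: "fps_nth G (Suc 0) = - (u3 + u4) / 2"
  by (simp_all add: bracket_fps_def Let_def)

lemma bracket_fps_mult_inverse [simp]: "G * inverse G = 1" "inverse G * G = 1"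
  by (simp_all add: inverse_mult_eq_1 inverse_mult_eq_1')

lemma fps_deriv_deriv_bracket_fps:
  "fps_deriv (fps_deriv G) = fps_const (((u3 + u4)^2 - 4 * u1 * u2) / 4) * G"
proof (rule fps_ext)
  fix n
  have "(of_nat (Suc n) :: 'a) \<noteq> 0" "(of_nat (Suc (Suc n)) :: 'a) \<noteq> 0"
    by (rule of_nat_neq_0)+
  moreover have "fact (Suc (Suc n)) = (of_nat (Suc (Suc n)) * of_nat (Suc n) * fact n :: 'a)"
    by (simp del: of_nat_Suc)
  ultimately show "fps_nth (fps_deriv (fps_deriv G)) n =
                     fps_nth (fps_const (((u3 + u4)^2 - 4 * u1 * u2) / 4) * G) n"
    by (simp add: bracket_fps_def Let_def field_simps del: of_nat_Suc fact_Suc)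
qed

lemma bracket_fps_wronskian:
  "fps_deriv G * fps_deriv G - G * fps_deriv (fps_deriv G) = fps_const (u1 * u2)"
proof -
  let ?W = "fps_deriv G * fps_deriv G - G * fps_deriv (fps_deriv G)"
  have "fps_deriv ?W = 0"
    by (simp add: fps_deriv_deriv_bracket_fps algebra_simps)
  then have "?W = fps_const (fps_nth ?W 0)"
    using fps_deriv_eq_0_iff by blast
  also have "fps_nth ?W 0 = u1 * u2"
    by (simp add: fps_deriv_deriv_bracket_fps field_simps power2_eq_square)
  finally show ?thesis .
qed

definition closed_lr :: "'a \<Rightarrow> 'a fps" where
  "closed_lr \<alpha> = fps_exp (- (\<alpha> * (u3 - u4) / 2)) * fps_cpow (- \<alpha>) G"

definition closed_rl :: "'a \<Rightarrow> 'a fps" where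
  "closed_rl \<beta> = fps_exp (\<beta> * (u3 - u4) / 2) * fps_cpow (- \<beta>) G"

definition closed_gap :: "'a fps" where
  "closed_gap = fps_const (- ((u3 + u4) / 2)) - inverse G * fps_deriv G"

lemma fps_deriv_closed_lr: "fps_deriv (closed_lr \<alpha>) = closed_lr \<alpha> * (fps_const \<alpha> * (fps_const u4 + closed_gap))"
proof -
  have "fps_deriv (closed_lr \<alpha>) =
          closed_lr \<alpha> * (fps_const (- (\<alpha> * (u3 - u4) / 2)) + fps_const (- \<alpha>) * (inverse G * fps_deriv G))"
    by (simp add: closed_lr_def fps_cpow_deriv[OF bracket_fps_nth_0] algebra_simps)
  also have "fps_const (- (\<alpha> * (u3 - u4) / 2)) + fps_const (- \<alpha>) * (inverse G * fps_deriv G) =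
             fps_const \<alpha> * (fps_const u4 + closed_gap)"
    by (rule fps_ext) (simp add: closed_gap_def algebra_simps field_simps)
  finally show ?thesis .
qed

lemma fps_deriv_closed_rl: "fps_deriv (closed_rl \<beta>) = closed_rl \<beta> * (fps_const \<beta> * (fps_const u3 + closed_gap))"
proof -
  have "fps_deriv (closed_rl \<beta>) =
          closed_rl \<beta> * (fps_const (\<beta> * (u3 - u4) / 2) + fps_const (- \<beta>) * (inverse G * fps_deriv G))"
    by (simp add: closed_rl_def fps_cpow_deriv[OF bracket_fps_nth_0] algebra_simps)
  also have "fps_const (\<beta> * (u3 - u4) / 2) + fps_const (- \<beta>) * (inverse G * fps_deriv G) =
             fps_const \<beta> * (fps_const u3 + closed_gap)"
    by (rule fps_ext) (simp add: closed_gap_def algebra_simps field_simps)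
  finally show ?thesis .
qed

lemma closed_rl_mult_closed_lr: "closed_rl 1 * closed_lr 1 = inverse G * inverse G"
proof -
  have "closed_rl 1 * closed_lr 1 =
          (fps_exp ((u3 - u4) / 2) * fps_exp (- ((u3 - u4) / 2))) * (fps_cpow (-1) G * fps_cpow (-1) G)"
    by (simp add: closed_lr_def closed_rl_def mult_ac)
  also have "fps_exp ((u3 - u4) / 2) * fps_exp (- ((u3 - u4) / 2)) = (1 :: 'a fps)"
    by (simp flip: fps_exp_add_mult)
  finally show ?thesis by (simp add: fps_cpow_minus_one)
qed

lemma fps_deriv_closed_gap: "fps_deriv closed_gap = fps_const (u1 * u2) * (closed_rl 1 * closed_lr 1)"
proof -
  let ?G' = "fps_deriv G" and ?G'' = "fps_deriv (fps_deriv G)"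
  have "fps_deriv closed_gap = inverse G * inverse G * (?G' * ?G' - G * ?G'')"
    by (simp add: closed_gap_def fps_inverse_deriv power2_eq_square algebra_simps)
  then show ?thesis
    by (simp add: bracket_fps_wronskian flip: closed_rl_mult_closed_lr)
qed

lemma closed_gap_nth_0: "fps_nth closed_gap 0 = 0"
  by (simp add: closed_gap_def field_simps)

lemma egf_gap_eq_closed_gap: "egf_gap - 1 = closed_gap"
proof (rule fps_ode_system_unique(3))
  show "fps_deriv (egf_lr 1) = egf_lr 1 * (fps_const u4 + (egf_gap - 1))"
    using fps_deriv_egf_lr[of 1] by simp
  show "fps_deriv (egf_rl 1) = egf_rl 1 * (fps_const u3 + (egf_gap - 1))"
    using fps_deriv_egf_rl[of 1] by simp
  show "fps_deriv (egf_gap - 1) = fps_const (u1 * u2) * (egf_rl 1 * egf_lr 1)"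
    by (simp add: fps_deriv_egf_gap)
  show "fps_deriv (closed_lr 1) = closed_lr 1 * (fps_const u4 + closed_gap)"
    using fps_deriv_closed_lr[of 1] by simp
  show "fps_deriv (closed_rl 1) = closed_rl 1 * (fps_const u3 + closed_gap)"
    using fps_deriv_closed_rl[of 1] by simp
  show "fps_deriv closed_gap = fps_const (u1 * u2) * (closed_rl 1 * closed_lr 1)"
    by (rule fps_deriv_closed_gap)
qed (simp_all add: egf_lr_def egf_rl_def egf_gap_def egf_def lr_maxima_def rl_maxima_def
       lr_weight_def rl_weight_def gap_weight_def closed_lr_def closed_rl_def closed_gap_nth_0)

lemma egf_lr_eq_closed_lr: "egf_lr \<alpha> = closed_lr \<alpha>"
proof (rule fps_linear_ode_unique)
  show "fps_deriv (egf_lr \<alpha>) = egf_lr \<alpha> * (fps_const \<alpha> * (fps_const u4 + closed_gap))"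
    by (simp add: fps_deriv_egf_lr egf_gap_eq_closed_gap)
  show "fps_deriv (closed_lr \<alpha>) = closed_lr \<alpha> * (fps_const \<alpha> * (fps_const u4 + closed_gap))"
    by (rule fps_deriv_closed_lr)
qed (simp add: egf_lr_def egf_def lr_weight_def lr_maxima_def closed_lr_def)

lemma egf_rl_eq_closed_rl: "egf_rl \<beta> = closed_rl \<beta>"
proof (rule fps_linear_ode_unique)
  show "fps_deriv (egf_rl \<beta>) = egf_rl \<beta> * (fps_const \<beta> * (fps_const u3 + closed_gap))"
    by (simp add: fps_deriv_egf_rl egf_gap_eq_closed_gap)
  show "fps_deriv (closed_rl \<beta>) = closed_rl \<beta> * (fps_const \<beta> * (fps_const u3 + closed_gap))"
    by (rule fps_deriv_closed_rl)
qed (simp add: egf_rl_def egf_def rl_weight_def rl_maxima_def closed_rl_def)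

end

theorem theorem1p5:
  fixes u1 u2 u3 u4 \<alpha> \<beta> :: "'a::field_char_0"
  shows "Abs_fps (\<lambda>n. Pn n u1 u2 u3 u4 \<alpha> \<beta> / fact n) =
         fps_exp ((\<beta> - \<alpha>) * (u3 - u4) / 2) *
         fps_cpow (- (\<alpha> + \<beta>)) (bracket_fps u1 u2 u3 u4)"
proof -
  let ?G = "bracket_fps u1 u2 u3 u4"
  have "Abs_fps (\<lambda>n. Pn n u1 u2 u3 u4 \<alpha> \<beta> / fact n) =
          fps_deriv (egf (perm_sum (perm_weight u1 u2 u3 u4 \<alpha> \<beta>)))"
    unfolding egf_deriv by (simp add: egf_def Pn_eq_perm_sum)
  also have "\<dots> = closed_lr u1 u2 u3 u4 \<alpha> * closed_rl u1 u2 u3 u4 \<beta>"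
    by (simp add: fps_deriv_egf_perm_weight egf_lr_eq_closed_lr egf_rl_eq_closed_rl)
  also have "\<dots> = (fps_exp (- (\<alpha> * (u3 - u4) / 2)) * fps_exp (\<beta> * (u3 - u4) / 2)) *
                   (fps_cpow (- \<alpha>) ?G * fps_cpow (- \<beta>) ?G)"
    by (simp add: closed_lr_def closed_rl_def mult_ac)
  also have "\<dots> = fps_exp (- (\<alpha> * (u3 - u4) / 2) + \<beta> * (u3 - u4) / 2) * fps_cpow (- \<alpha> + - \<beta>) ?G"
    by (simp only: fps_exp_add_mult fps_cpow_add)
  also have "- (\<alpha> * (u3 - u4) / 2) + \<beta> * (u3 - u4) / 2 = (\<beta> - \<alpha>) * (u3 - u4) / 2"
    by (simp add: field_simps)
  finally show ?thesis by simp
qed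

end
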